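(* Let $f,g\colon X\to Y$ and $f',g'\colon X'\to Y'$ be continuous maps, and assume that $X\times X'$ is a normal space. Then the maps $f\times f',\,g\times g'\colon X\times X'\to Y\times Y'$ satisfy $\mathrm{D}(f\times f',g\times g')\leq \mathrm{D}(f,g)+\mathrm{D}(f',g')$.
   Context: For continuous maps $f,g\colon X\to Y$, the homotopic distance $\mathrm{D}(f,g)$ is the least integer $n\geq 0$ such that there is an open cover $\{U_0,\dots,U_n\}$ of $X$ with $f|_{U_j}\simeq g|_{U_j}$ for all $j$; if no such cover exists, $\mathrm{D}(f,g)=\infty$. *)

theory Defs
  imports "HOL-Analysis.Analysis" "HOL-Library.Extended_Nat"
begin

definition homotopic_distance ::
  "'a topology \<Rightarrow> 'b topology \<Rightarrow> ('a \<Rightarrow> 'b) \<Rightarrow> ('a \<Rightarrow> 'b) \<Rightarrow> enat" where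
  "homotopic_distance X Y f g =
     Inf {enat n | n. \<exists>U :: nat \<Rightarrow> 'a set.
            (\<forall>j\<le>n. openin X (U j)) \<and>
            (\<Union>j\<le>n. U j) = topspace X \<and>
            (\<forall>j\<le>n. homotopic_with (\<lambda>_. True) (subtopology X (U j)) Y f g)}"

end

theory Submission
  imports Defs
begin

text \<open>Take covers \<open>U\<^sub>0, ..., U\<^sub>n\<close> of \<open>X\<close> and \<open>V\<^sub>0, ..., V\<^sub>m\<close> of \<open>X'\<close> on whose members
  \<open>f \<simeq> g\<close> and \<open>f' \<simeq> g'\<close>. The products \<open>U\<^sub>i \<times> V\<^sub>j\<close> cover \<open>X \<times> X'\<close> and the product
  maps are homotopic on each of them; grouping them by \<open>i + j\<close> gives \<open>n + m + 1\<close> sets, but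
  homotopies on overlapping pieces need not agree. Normality of \<open>X \<times> X'\<close> repairs this:
  functions subordinate to the two covers, via their partial sums, shrink the pieces
  \<open>U\<^sub>i \<times> V\<^sub>j\<close> to open sets \<open>W\<^sub>i\<^sub>j\<close> that still cover and are pairwise disjoint along each
  antidiagonal \<open>i + j = k\<close>, so the homotopies on them paste together.\<close>

lemma openin_continuous_map_less:
  assumes "continuous_map Z euclideanreal f" "continuous_map Z euclideanreal g"
  shows "openin Z {p \<in> topspace Z. f p < g p}"
proof -
  have "openin Z {p \<in> topspace Z. g p - f p \<in> {0<..}}"
    by (rule openin_continuous_map_preimage) (use assms in \<open>auto intro: continuous_intros\<close>)
  then show ?thesis
    by simp
qed

lemma Urysohn_open_cover_function:
  assumes "normal_space Z" "openin Z P" "openin Z S" "topspace Z \<subseteq> P \<union> S"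
  obtains \<phi> :: "'a \<Rightarrow> real" where "continuous_map Z euclideanreal \<phi>"
    "\<And>p. p \<in> topspace Z \<Longrightarrow> 0 \<le> \<phi> p"
    "\<And>p. p \<in> topspace Z \<Longrightarrow> 0 < \<phi> p \<Longrightarrow> p \<in> P"
    "\<And>p. p \<in> topspace Z - S \<Longrightarrow> \<phi> p = 1"
proof -
  have "disjnt (topspace Z - P) (topspace Z - S)"
    using assms(4) by (auto simp: disjnt_def)
  then obtain \<phi> :: "'a \<Rightarrow> real" where \<phi>: "continuous_map Z (top_of_set {0..1}) \<phi>"
    "\<phi> ` (topspace Z - P) \<subseteq> {0}" "\<phi> ` (topspace Z - S) \<subseteq> {1}"
    using Urysohn_lemma[of Z "topspace Z - P" "topspace Z - S" 0 1] assms by auto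
  show thesis
  proof
    show "continuous_map Z euclideanreal \<phi>"
      using \<phi>(1) continuous_map_in_subtopology by blast
    show "0 \<le> \<phi> p" if "p \<in> topspace Z" for p
      using \<phi>(1) that by (auto simp: continuous_map_in_subtopology)
    show "p \<in> P" if "p \<in> topspace Z" "0 < \<phi> p" for p
      using \<phi>(2) that by fastforce
  qed (use \<phi>(3) in auto)
qed

lemma normal_space_subordinate_functions:
  fixes P :: "'i \<Rightarrow> 'a set"
  assumes Z: "normal_space Z" and "finite I"
    and P: "\<And>i. i \<in> I \<Longrightarrow> openin Z (P i)" and cover: "topspace Z \<subseteq> (\<Union>i\<in>I. P i)"
  obtains \<phi> :: "'i \<Rightarrow> 'a \<Rightarrow> real" where
    "\<And>i. i \<in> I \<Longrightarrow> continuous_map Z euclideanreal (\<phi> i)"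
    "\<And>i p. i \<in> I \<Longrightarrow> p \<in> topspace Z \<Longrightarrow> 0 \<le> \<phi> i p"
    "\<And>i p. i \<in> I \<Longrightarrow> p \<in> topspace Z \<Longrightarrow> 0 < \<phi> i p \<Longrightarrow> p \<in> P i"
    "\<And>p. p \<in> topspace Z \<Longrightarrow> \<exists>i\<in>I. 0 < \<phi> i p"
proof -
  define fits where "fits J \<phi> \<longleftrightarrow> (\<forall>i\<in>J. continuous_map Z euclideanreal (\<phi> i) \<and>
      (\<forall>p\<in>topspace Z. 0 \<le> \<phi> i p \<and> (0 < \<phi> i p \<longrightarrow> p \<in> P i)))"
    for J and \<phi> :: "'i \<Rightarrow> 'a \<Rightarrow> real"
  define cozero where "cozero \<phi> = {p \<in> topspace Z. 0 < \<phi> p}" for \<phi> :: "'a \<Rightarrow> real"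
  have partial: "\<exists>\<phi>. fits J \<phi> \<and> topspace Z \<subseteq> (\<Union>i\<in>J. cozero (\<phi> i)) \<union> (\<Union>i\<in>I - J. P i)" if "J \<subseteq> I" for J
    using finite_subset[OF that \<open>finite I\<close>] that
  proof (induction J rule: finite_subset_induct)
    case empty
    show ?case using cover unfolding fits_def by auto
  next
    case (insert k J)
    then obtain \<phi> where fits: "fits J \<phi>"
      and covered: "topspace Z \<subseteq> (\<Union>i\<in>J. cozero (\<phi> i)) \<union> (\<Union>i\<in>I - J. P i)"
      by blast
    define S where "S = (\<Union>i\<in>J. cozero (\<phi> i)) \<union> (\<Union>i\<in>I - insert k J. P i)"
    have "openin Z (cozero (\<phi> i))" if "i \<in> J" for i
      using fits that openin_continuous_map_less[of Z "\<lambda>_. 0" "\<phi> i"]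
      by (simp add: fits_def cozero_def)
    then have "openin Z S"
      unfolding S_def using P by blast
    moreover have "topspace Z \<subseteq> P k \<union> S"
      using covered unfolding S_def by blast
    ultimately obtain \<psi> where \<psi>: "continuous_map Z euclideanreal \<psi>"
      "\<And>p. p \<in> topspace Z \<Longrightarrow> 0 \<le> \<psi> p" "\<And>p. p \<in> topspace Z \<Longrightarrow> 0 < \<psi> p \<Longrightarrow> p \<in> P k"
      "\<And>p. p \<in> topspace Z - S \<Longrightarrow> \<psi> p = 1"
      using Urysohn_open_cover_function[OF Z P[OF \<open>k \<in> I\<close>]] by blast
    have "fits (insert k J) (\<phi>(k := \<psi>))"
      using fits \<psi> \<open>k \<notin> J\<close> by (auto simp: fits_def)
    moreover have "topspace Z \<subseteq> (\<Union>i\<in>insert k J. cozero ((\<phi>(k := \<psi>)) i)) \<union> (\<Union>i\<in>I - insert k J. P i)"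
      using \<psi>(4) \<open>k \<notin> J\<close> by (force simp: S_def cozero_def)
    ultimately show ?case by blast
  qed
  obtain \<phi> where "fits I \<phi>" "topspace Z \<subseteq> (\<Union>i\<in>I. cozero (\<phi> i))"
    using partial[OF order_refl] by auto
  then show thesis
    using that unfolding fits_def cozero_def by blast
qed

lemma crossing_index:
  fixes a :: "nat \<Rightarrow> 'a::linorder"
  assumes "a 0 < s" "s < a (Suc n)" "\<And>l. l \<le> Suc n \<Longrightarrow> a l \<noteq> s"
  obtains i where "i \<le> n" "a i < s" "s < a (Suc i)"
  using assms
proof (induction n arbitrary: thesis)
  case 0
  then show ?case by auto
next
  case (Suc n)
  show ?case
  proof (cases "s < a (Suc n)")
    case True
    then show ?thesis
      using Suc.IH[of thesis] Suc.prems by (meson le_Suc_eq)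
  next
    case False
    then have "a (Suc n) < s"
      using Suc.prems(4)[of "Suc n"] by auto
    then show ?thesis
      using Suc.prems(1)[of "Suc n"] Suc.prems(3) by blast
  qed
qed

definition cells_overlap :: "(nat \<Rightarrow> real) \<Rightarrow> (nat \<Rightarrow> real) \<Rightarrow> nat \<Rightarrow> nat \<Rightarrow> bool" where
  "cells_overlap a b i j \<longleftrightarrow> max (a i) (b j) < min (a (Suc i)) (b (Suc j))"

lemma cells_overlap_exists:
  assumes "max (a 0) (b 0) < min (a (Suc n)) (b (Suc m))"
  obtains i j where "i \<le> n" "j \<le> m" "cells_overlap a b i j"
proof -
  let ?F = "a ` {..Suc n} \<union> b ` {..Suc m}"
  have "infinite ({max (a 0) (b 0)<..<min (a (Suc n)) (b (Suc m))} - ?F)"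
    using assms by (intro Diff_infinite_finite infinite_Ioo) auto
  then obtain s where "s \<in> {max (a 0) (b 0)<..<min (a (Suc n)) (b (Suc m))} - ?F"
    using infinite_imp_nonempty by blast
  then have s: "max (a 0) (b 0) < s" "s < min (a (Suc n)) (b (Suc m))" and generic: "s \<notin> ?F"
    by auto
  obtain i where "i \<le> n" "a i < s" "s < a (Suc i)"
    using crossing_index[of a s n] s generic by auto
  moreover obtain j where "j \<le> m" "b j < s" "s < b (Suc j)"
    using crossing_index[of b s m] s generic by auto
  ultimately show thesis
    using that by (auto simp: cells_overlap_def)
qed

lemma cells_overlap_antidiagonal:
  assumes "mono_on {..Suc n} a" "mono_on {..Suc m} b"
    and "cells_overlap a b i j" "cells_overlap a b i' j'"
    and "i \<le> n" "i' \<le> n" "j \<le> m" "j' \<le> m" "i + j = i' + j'"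
  shows "i = i'"
proof -
  have False if "cells_overlap a b i j" "cells_overlap a b i' j'" "i < i'" "i' \<le> n" "j \<le> m"
    "i + j = i' + j'" for i j i' j'
  proof -
    have "a (Suc i) \<le> a i'"
      using \<open>mono_on {..Suc n} a\<close> that by (auto intro: mono_onD)
    moreover have "b (Suc j') \<le> b j"
      using \<open>mono_on {..Suc m} b\<close> that by (auto intro: mono_onD)
    ultimately show False
      using that by (auto simp: cells_overlap_def)
  qed
  then show ?thesis
    using assms by (metis linorder_neqE_nat)
qed

lemma normal_space_antidiagonal_refinement:
  fixes P Q :: "nat \<Rightarrow> 'a set"
  assumes Z: "normal_space Z"
    and P: "\<And>i. i \<le> n \<Longrightarrow> openin Z (P i)" "topspace Z \<subseteq> (\<Union>i\<le>n. P i)"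
    and Q: "\<And>j. j \<le> m \<Longrightarrow> openin Z (Q j)" "topspace Z \<subseteq> (\<Union>j\<le>m. Q j)"
  obtains W where "\<And>i j. i \<le> n \<Longrightarrow> j \<le> m \<Longrightarrow> openin Z (W i j)"
    "\<And>i j. i \<le> n \<Longrightarrow> j \<le> m \<Longrightarrow> W i j \<subseteq> P i \<inter> Q j"
    "\<And>i j i' j'. \<lbrakk>i \<le> n; j \<le> m; i' \<le> n; j' \<le> m; i + j = i' + j'; i \<noteq> i'\<rbrakk>
       \<Longrightarrow> disjnt (W i j) (W i' j')"
    "topspace Z \<subseteq> (\<Union>i\<le>n. \<Union>j\<le>m. W i j)"
proof -
  obtain \<phi> :: "nat \<Rightarrow> 'a \<Rightarrow> real" where
    \<phi>_cont: "\<And>i. i \<le> n \<Longrightarrow> continuous_map Z euclideanreal (\<phi> i)" and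
    \<phi>_nonneg: "\<And>i p. i \<le> n \<Longrightarrow> p \<in> topspace Z \<Longrightarrow> 0 \<le> \<phi> i p" and
    \<phi>_P: "\<And>i p. i \<le> n \<Longrightarrow> p \<in> topspace Z \<Longrightarrow> 0 < \<phi> i p \<Longrightarrow> p \<in> P i" and
    \<phi>_pos: "\<And>p. p \<in> topspace Z \<Longrightarrow> \<exists>i\<le>n. 0 < \<phi> i p"
    by (rule normal_space_subordinate_functions[OF Z finite_atMost, of n P]) (use P in fastforce)+
  obtain \<psi> :: "nat \<Rightarrow> 'a \<Rightarrow> real" where
    \<psi>_cont: "\<And>j. j \<le> m \<Longrightarrow> continuous_map Z euclideanreal (\<psi> j)" and
    \<psi>_nonneg: "\<And>j p. j \<le> m \<Longrightarrow> p \<in> topspace Z \<Longrightarrow> 0 \<le> \<psi> j p" and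
    \<psi>_Q: "\<And>j p. j \<le> m \<Longrightarrow> p \<in> topspace Z \<Longrightarrow> 0 < \<psi> j p \<Longrightarrow> p \<in> Q j" and
    \<psi>_pos: "\<And>p. p \<in> topspace Z \<Longrightarrow> \<exists>j\<le>m. 0 < \<psi> j p"
    by (rule normal_space_subordinate_functions[OF Z finite_atMost, of m Q]) (use Q in fastforce)+
  \<comment> \<open>At each point the partial sums of \<open>\<phi>\<close> and \<open>\<psi>\<close> cut two intervals into consecutive
    cells, and \<open>W i j\<close> is where the \<open>i\<close>-th cell of the first meets the \<open>j\<close>-th of the second.
    On an antidiagonal \<open>i + j = k\<close> a step up in one index is a step down in the other,
    so two such pairs of cells cannot both meet.\<close>
  define a where "a p i = (\<Sum>l<i. \<phi> l p)" for p i
  define b where "b p j = (\<Sum>l<j. \<psi> l p)" for p j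
  define W where "W i j = {p \<in> topspace Z. cells_overlap (a p) (b p) i j}" for i j
  have a_cont: "continuous_map Z euclideanreal (\<lambda>p. a p i)" if "i \<le> Suc n" for i
    unfolding a_def using that by (intro continuous_map_sum) (auto intro: \<phi>_cont)
  have b_cont: "continuous_map Z euclideanreal (\<lambda>p. b p j)" if "j \<le> Suc m" for j
    unfolding b_def using that by (intro continuous_map_sum) (auto intro: \<psi>_cont)
  have a_mono: "mono_on {..Suc n} (a p)" if "p \<in> topspace Z" for p
    unfolding a_def using that by (intro mono_onI sum_mono2) (auto intro: \<phi>_nonneg)
  have b_mono: "mono_on {..Suc m} (b p)" if "p \<in> topspace Z" for p
    unfolding b_def using that by (intro mono_onI sum_mono2) (auto intro: \<psi>_nonneg)
  show thesis
  proof
    fix i j assume "i \<le> n" "j \<le> m"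
    then show "openin Z (W i j)"
      unfolding W_def cells_overlap_def
      by (intro openin_continuous_map_less continuous_map_real_max continuous_map_real_min a_cont b_cont)
        auto
  next
    fix i j assume "i \<le> n" "j \<le> m"
    then show "W i j \<subseteq> P i \<inter> Q j"
      using \<phi>_P \<psi>_Q by (auto simp: W_def cells_overlap_def a_def b_def)
  next
    fix i j i' j' assume "i \<le> n" "j \<le> m" "i' \<le> n" "j' \<le> m" "i + j = i' + j'" "i \<noteq> i'"
    then show "disjnt (W i j) (W i' j')"
      using cells_overlap_antidiagonal[OF a_mono b_mono] by (auto simp: W_def disjnt_def)
  next
    show "topspace Z \<subseteq> (\<Union>i\<le>n. \<Union>j\<le>m. W i j)"
    proof
      fix p assume p: "p \<in> topspace Z"
      obtain i0 where "i0 \<le> n" "0 < \<phi> i0 p"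
        using \<phi>_pos[OF p] by blast
      then have "0 < a p (Suc n)"
        unfolding a_def by (intro sum_pos2[of _ i0]) (auto intro: \<phi>_nonneg p)
      moreover obtain j0 where "j0 \<le> m" "0 < \<psi> j0 p"
        using \<psi>_pos[OF p] by blast
      then have "0 < b p (Suc m)"
        unfolding b_def by (intro sum_pos2[of _ j0]) (auto intro: \<psi>_nonneg p)
      ultimately obtain i j where "i \<le> n" "j \<le> m" "cells_overlap (a p) (b p) i j"
        using cells_overlap_exists[of "a p" "b p" n m] by (auto simp: a_def b_def)
      then show "p \<in> (\<Union>i\<le>n. \<Union>j\<le>m. W i j)"
        using p by (auto simp: W_def)
    qed
  qed
qed

lemma homotopic_with_disjoint_open_Union:
  assumes T_open: "\<And>i. i \<in> I \<Longrightarrow> openin Z (T i)"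
    and T_disj: "\<And>i j. \<lbrakk>i \<in> I; j \<in> I; i \<noteq> j\<rbrakk> \<Longrightarrow> disjnt (T i) (T j)"
    and hom: "\<And>i. i \<in> I \<Longrightarrow> homotopic_with (\<lambda>_. True) (subtopology Z (T i)) Y f g"
  shows "homotopic_with (\<lambda>_. True) (subtopology Z (\<Union>i\<in>I. T i)) Y f g"
proof -
  let ?J = "top_of_set {0..1::real}"
  let ?W = "\<Union>i\<in>I. T i"
  have "\<forall>i\<in>I. \<exists>h. continuous_map (prod_topology ?J (subtopology Z (T i))) Y h \<and>
      (\<forall>x\<in>topspace Z \<inter> T i. h (0, x) = f x \<and> h (1, x) = g x)"
    using hom by (simp add: homotopic_with ball_conj_distrib)
  then obtain h where h_cont: "\<And>i. i \<in> I \<Longrightarrow> continuous_map (prod_topology ?J (subtopology Z (T i))) Y (h i)"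
    and h_ends: "\<And>i x. \<lbrakk>i \<in> I; x \<in> topspace Z \<inter> T i\<rbrakk> \<Longrightarrow> h i (0, x) = f x \<and> h i (1, x) = g x"
    by metis
  let ?X = "prod_topology ?J (subtopology Z ?W)"
  obtain H where H_cont: "continuous_map ?X Y H"
    and H_eq: "\<And>x i. \<lbrakk>i \<in> I; x \<in> topspace ?X \<inter> ({0..1} \<times> T i)\<rbrakk> \<Longrightarrow> H x = h i x"
  proof (rule pasting_lemma_exists[where X = ?X and T = "\<lambda>i. {0..1} \<times> T i" and f = h])
    show "topspace ?X \<subseteq> (\<Union>i\<in>I. {0..1} \<times> T i)"
      by auto
  next
    fix i assume "i \<in> I"
    then show "openin ?X ({0..1} \<times> T i)"
      using T_open by (auto simp: openin_prod_Times_iff intro: subset_openin_subtopology)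
    have "subtopology ?X ({0..1} \<times> T i) = prod_topology ?J (subtopology Z (T i))"
      using \<open>i \<in> I\<close> by (simp add: subtopology_Times subtopology_subtopology Int_absorb1 Int_absorb2 UN_upper)
    then show "continuous_map (subtopology ?X ({0..1} \<times> T i)) Y (h i)"
      using h_cont[OF \<open>i \<in> I\<close>] by simp
  next
    fix i j x assume "i \<in> I" "j \<in> I" "x \<in> topspace ?X \<inter> ({0..1} \<times> T i) \<inter> ({0..1} \<times> T j)"
    then show "h i x = h j x"
      using T_disj[of i j] by (cases "i = j") (auto simp: disjnt_def)
  qed auto
  show ?thesis
    unfolding homotopic_with[OF refl]
  proof (intro exI conjI ballI)
    show "continuous_map ?X Y H" by (fact H_cont)
  next
    fix x assume "x \<in> topspace (subtopology Z ?W)"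
    then obtain i where "i \<in> I" "x \<in> topspace Z \<inter> T i"
      by auto
    then show "H (0, x) = f x" and "H (1, x) = g x"
      using H_eq[of i "(0, x)"] H_eq[of i "(1, x)"] h_ends[of i x] by auto
  qed auto
qed

lemma homotopic_with_prod_subtopology:
  assumes "homotopic_with (\<lambda>_. True) (subtopology X U) Y f g"
    and "homotopic_with (\<lambda>_. True) (subtopology X' U') Y' f' g'"
  shows "homotopic_with (\<lambda>_. True) (subtopology (prod_topology X X') (U \<times> U')) (prod_topology Y Y')
           (\<lambda>(x, x'). (f x, f' x')) (\<lambda>(x, x'). (g x, g' x'))"
  using homotopic_with_prod_topology[OF assms, of "\<lambda>_. True"]
  by (simp add: subtopology_Times case_prod_beta')

lemma homotopic_distance_leI:
  assumes "\<And>j. j \<le> n \<Longrightarrow> openin X (U j)" "(\<Union>j\<le>n. U j) = topspace X"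
    and "\<And>j. j \<le> n \<Longrightarrow> homotopic_with (\<lambda>_. True) (subtopology X (U j)) Y f g"
  shows "homotopic_distance X Y f g \<le> enat n"
  unfolding homotopic_distance_def using assms by (intro Inf_lower) blast

lemma homotopic_distance_enatE:
  assumes "homotopic_distance X Y f g = enat n"
  obtains U where "\<And>j. j \<le> n \<Longrightarrow> openin X (U j)" "(\<Union>j\<le>n. U j) = topspace X"
    "\<And>j. j \<le> n \<Longrightarrow> homotopic_with (\<lambda>_. True) (subtopology X (U j)) Y f g"
proof -
  let ?S = "{enat k |k. \<exists>U :: nat \<Rightarrow> 'a set. (\<forall>j\<le>k. openin X (U j)) \<and>
      (\<Union>j\<le>k. U j) = topspace X \<and> (\<forall>j\<le>k. homotopic_with (\<lambda>_. True) (subtopology X (U j)) Y f g)}"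
  have "?S \<noteq> {}"
  proof
    assume "?S = {}"
    then have "Inf ?S = \<infinity>"
      by (metis Inf_empty top_enat_def)
    with assms show False
      unfolding homotopic_distance_def by simp
  qed
  then obtain k where "k \<in> ?S"
    by blast
  then have "Inf ?S \<in> ?S"
    by (rule wellorder_InfI)
  then have "enat n \<in> ?S"
    using assms by (simp only: homotopic_distance_def)
  then show thesis
    using that by auto
qed

lemma homotopic_distance_le_add_intersection_covers:
  assumes Z: "normal_space Z"
    and P: "\<And>i. i \<le> n \<Longrightarrow> openin Z (P i)" "topspace Z \<subseteq> (\<Union>i\<le>n. P i)"
    and Q: "\<And>j. j \<le> m \<Longrightarrow> openin Z (Q j)" "topspace Z \<subseteq> (\<Union>j\<le>m. Q j)"
    and hom: "\<And>i j. \<lbrakk>i \<le> n; j \<le> m\<rbrakk> \<Longrightarrow> homotopic_with (\<lambda>_. True) (subtopology Z (P i \<inter> Q j)) Y f g"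
  shows "homotopic_distance Z Y f g \<le> enat (n + m)"
proof (rule normal_space_antidiagonal_refinement[OF Z P Q])
  fix W
  assume W_open: "\<And>i j. i \<le> n \<Longrightarrow> j \<le> m \<Longrightarrow> openin Z (W i j)"
    and W_sub: "\<And>i j. i \<le> n \<Longrightarrow> j \<le> m \<Longrightarrow> W i j \<subseteq> P i \<inter> Q j"
    and W_disj: "\<And>i j i' j'. \<lbrakk>i \<le> n; j \<le> m; i' \<le> n; j' \<le> m; i + j = i' + j'; i \<noteq> i'\<rbrakk>
       \<Longrightarrow> disjnt (W i j) (W i' j')"
    and W_cover: "topspace Z \<subseteq> (\<Union>i\<le>n. \<Union>j\<le>m. W i j)"
  define I where "I k = {(i, j). i \<le> n \<and> j \<le> m \<and> i + j = k}" for k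
  define V where "V k = (\<Union>(i, j)\<in>I k. W i j)" for k
  show ?thesis
  proof (rule homotopic_distance_leI)
    show "openin Z (V k)" for k
      unfolding V_def I_def by (auto intro: W_open)
    show "(\<Union>k\<le>n + m. V k) = topspace Z"
    proof
      show "(\<Union>k\<le>n + m. V k) \<subseteq> topspace Z"
        using openin_subset[OF W_open] by (auto simp: V_def I_def)
      show "topspace Z \<subseteq> (\<Union>k\<le>n + m. V k)"
      proof
        fix p assume "p \<in> topspace Z"
        then obtain i j where "i \<le> n" "j \<le> m" "p \<in> W i j"
          using W_cover by blast
        then show "p \<in> (\<Union>k\<le>n + m. V k)"
          by (auto simp: V_def I_def intro!: bexI[where x = "i + j"])
      qed
    qed
    show "homotopic_with (\<lambda>_. True) (subtopology Z (V k)) Y f g" for k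
      unfolding V_def
    proof (rule homotopic_with_disjoint_open_Union)
      fix ij assume "ij \<in> I k"
      then obtain i j where ij: "ij = (i, j)" "i \<le> n" "j \<le> m"
        by (auto simp: I_def)
      then show "openin Z (case ij of (i, j) \<Rightarrow> W i j)"
        by (simp add: W_open)
      have "P i \<inter> Q j \<inter> W i j = W i j"
        using W_sub ij by blast
      then show "homotopic_with (\<lambda>_. True) (subtopology Z (case ij of (i, j) \<Rightarrow> W i j)) Y f g"
        using homotopic_from_subtopology[OF hom[OF \<open>i \<le> n\<close> \<open>j \<le> m\<close>], of "W i j"] ij
        by (simp add: subtopology_subtopology)
    next
      fix ij ij' assume "ij \<in> I k" "ij' \<in> I k" "ij \<noteq> ij'"
      then obtain i j i' j' where "ij = (i, j)" "ij' = (i', j')" "i \<le> n" "j \<le> m" "i' \<le> n" "j' \<le> m"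
        "i + j = i' + j'" "i \<noteq> i'"
        by (cases ij; cases ij'; auto simp: I_def)
      then show "disjnt (case ij of (i, j) \<Rightarrow> W i j) (case ij' of (i, j) \<Rightarrow> W i j)"
        using W_disj by simp
    qed
  qed
qed

lemma homotopic_distance_prod_le_enat_add:
  assumes "normal_space (prod_topology X X')"
    and n: "homotopic_distance X Y f g = enat n" and m: "homotopic_distance X' Y' f' g' = enat m"
  shows "homotopic_distance (prod_topology X X') (prod_topology Y Y')
           (\<lambda>(x, x'). (f x, f' x')) (\<lambda>(x, x'). (g x, g' x')) \<le> enat (n + m)"
proof -
  obtain U where U_open: "\<And>i. i \<le> n \<Longrightarrow> openin X (U i)" and U_cover: "(\<Union>i\<le>n. U i) = topspace X"
    and U_hom: "\<And>i. i \<le> n \<Longrightarrow> homotopic_with (\<lambda>_. True) (subtopology X (U i)) Y f g"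
    using homotopic_distance_enatE[OF n] by blast
  obtain V where V_open: "\<And>j. j \<le> m \<Longrightarrow> openin X' (V j)" and V_cover: "(\<Union>j\<le>m. V j) = topspace X'"
    and V_hom: "\<And>j. j \<le> m \<Longrightarrow> homotopic_with (\<lambda>_. True) (subtopology X' (V j)) Y' f' g'"
    using homotopic_distance_enatE[OF m] by blast
  have hom: "homotopic_with (\<lambda>_. True)
      (subtopology (prod_topology X X') ((U i \<times> topspace X') \<inter> (topspace X \<times> V j)))
      (prod_topology Y Y') (\<lambda>(x, x'). (f x, f' x')) (\<lambda>(x, x'). (g x, g' x'))"
    if "i \<le> n" "j \<le> m" for i j
  proof -
    have "(U i \<times> topspace X') \<inter> (topspace X \<times> V j) = U i \<times> V j"
      using openin_subset[OF U_open[OF \<open>i \<le> n\<close>]] openin_subset[OF V_open[OF \<open>j \<le> m\<close>]] by auto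
    then show ?thesis
      using homotopic_with_prod_subtopology[OF U_hom[OF \<open>i \<le> n\<close>] V_hom[OF \<open>j \<le> m\<close>]] by simp
  qed
  show ?thesis
    by (rule homotopic_distance_le_add_intersection_covers[OF assms(1) _ _ _ _ hom])
      (use U_open U_cover V_open V_cover in \<open>auto simp: openin_prod_Times_iff\<close>)
qed

theorem theorem3p20:
  fixes X :: "'a topology" and Y :: "'b topology"
    and X' :: "'c topology" and Y' :: "'d topology"
    and f g :: "'a \<Rightarrow> 'b" and f' g' :: "'c \<Rightarrow> 'd"
  assumes "continuous_map X Y f" and "continuous_map X Y g"
    and "continuous_map X' Y' f'" and "continuous_map X' Y' g'"
    and "normal_space (prod_topology X X')"
  shows "homotopic_distance (prod_topology X X') (prod_topology Y Y')
           (\<lambda>(x, x'). (f x, f' x')) (\<lambda>(x, x'). (g x, g' x'))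
         \<le> homotopic_distance X Y f g + homotopic_distance X' Y' f' g'"
proof (cases "homotopic_distance X Y f g = \<infinity> \<or> homotopic_distance X' Y' f' g' = \<infinity>")
  case True
  then show ?thesis
    by auto
next
  case False
  then obtain n m where "homotopic_distance X Y f g = enat n"
    and "homotopic_distance X' Y' f' g' = enat m"
    by auto
  then show ?thesis
    using homotopic_distance_prod_le_enat_add[OF assms(5)] by simp
qed

end
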